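(* Let $n,m\ge 1$, let $A_1,\dots,A_m\in\mathbb{S}^n$ and $b\in\mathbb{R}^m$ be fixed, and let $p\ge 1$ be such that $\frac{p(p+1)}{2}>\operatorname{rank}\mathcal{A}$ and such that Assumption 1 holds for $p$. Then for almost every cost matrix $C\in\mathbb{S}^n$ (i.e., for all $C$ outside a Lebesgue-null subset of $\mathbb{S}^n$), the following holds: if $Y\in\mathcal{M}_p$ is a second-order critical point of (P), then $Y$ is globally optimal for (P) and $X=YY^\top$ is globally optimal for (SDP).
   Context: $\mathbb{S}^n$ is the space of real symmetric $n\times n$ matrices; $\langle U,V\rangle=\operatorname{tr}(U^\top V)$. The linear map $\mathcal{A}:\mathbb{S}^n\to\mathbb{R}^m$ is $\mathcal{A}(X)_i=\langle A_i,X\rangle$, with adjoint $\mathcal{A}^*(\nu)=\sum_i\nu_iA_i$; $\operatorname{rank}\mathcal{A}$ is the rank of this linear map. For $C\in\mathbb{S}^n$, (SDP) is: minimize $\langle C,X\rangle$ over $X\in\mathbb{S}^n$ with $\mathcal{A}(X)=b$, $X\succeq 0$ (feasible set assumed non-empty). For $p\ge1$, $\mathcal{M}_p=\{Y\in\mathbb{R}^{n\times p}:\mathcal{A}(YY^\top)=b\}$ and (P) is: minimize $g(Y)=\langle CY,Y\rangle$ over $Y\in\mathcal{M}_p$. Assumption 1 (for a given $p$ with $\mathcal{M}_p\neq\emptyset$): either (a) $A_1Y,\dots,A_mY$ are linearly independent in $\mathbb{R}^{n\times p}$ for all $Y\in\mathcal{M}_p$, or (b) $\operatorname{span}\{A_1Y,\dots,A_mY\}$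 has the same dimension for all $Y$ in some open neighborhood of $\mathcal{M}_p$ in $\mathbb{R}^{n\times p}$. For $Y\in\mathcal{M}_p$: the tangent space is $T_Y=\{\dot Y\in\mathbb{R}^{n\times p}:\langle A_iY,\dot Y\rangle=0,\ i=1,\dots,m\}$; $G(Y)\in\mathbb{R}^{m\times m}$ has entries $G_{ij}=\langle A_iY,A_jY\rangle$; $\mu(Y)=G(Y)^\dagger\mathcal{A}(CYY^\top)$ (Moore–Penrose pseudo-inverse); $S(Y)=C-\mathcal{A}^*(\mu(Y))$. $Y$ is a (first-order) critical point of (P) if $S(Y)Y=0$, and a second-order critical point if moreover $\langle\dot Y,S(Y)\dot Y\rangle\ge0$ for all $\dot Y\in T_Y$. *)

theory Defs
  imports "HOL-Analysis.Analysis"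
begin

text \<open>Matrices are represented by Cartesian types: an n x p real matrix is
  real^'p^'n (rows indexed by 'n, columns by 'p). The Frobenius inner product
  tr(U^T V) is the built-in inner product on real^'p^'n (sum of entrywise products).\<close>

definition sym_mat :: "real^'n^'n \<Rightarrow> bool" where
  "sym_mat X \<longleftrightarrow> transpose X = X"

definition psd :: "real^'n^'n \<Rightarrow> bool" where
  "psd X \<longleftrightarrow> (\<forall>x. x \<bullet> (X *v x) \<ge> 0)"

definition Aop :: "('m::finite \<Rightarrow> real^'n^'n) \<Rightarrow> real^'n^'n \<Rightarrow> real^'m" where
  "Aop A X = (\<chi> i. A i \<bullet> X)"

definition Aadj :: "('m::finite \<Rightarrow> real^'n^'n) \<Rightarrow> real^'m \<Rightarrow> real^'n^'n" where
  "Aadj A \<nu> = (\<Sum>i\<in>UNIV. (\<nu> $ i) *\<^sub>R A i)"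

definition rankA :: "('m::finite \<Rightarrow> real^'n^'n) \<Rightarrow> nat" where
  "rankA A = dim (Aop A ` {X. sym_mat X})"

definition sdp_feasible :: "('m::finite \<Rightarrow> real^'n^'n) \<Rightarrow> real^'m \<Rightarrow> real^'n^'n \<Rightarrow> bool" where
  "sdp_feasible A b X \<longleftrightarrow> sym_mat X \<and> Aop A X = b \<and> psd X"

definition sdp_optimal :: "('m::finite \<Rightarrow> real^'n^'n) \<Rightarrow> real^'m \<Rightarrow> real^'n^'n \<Rightarrow> real^'n^'n \<Rightarrow> bool" where
  "sdp_optimal A b C X \<longleftrightarrow> sdp_feasible A b X \<and>
     (\<forall>X'. sdp_feasible A b X' \<longrightarrow> C \<bullet> X \<le> C \<bullet> X')"

definition Mp :: "('m::finite \<Rightarrow> real^'n^'n) \<Rightarrow> real^'m \<Rightarrow> (real^'p^'n) set" where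
  "Mp A b = {Y. Aop A (Y ** transpose Y) = b}"

definition gcost :: "real^'n^'n \<Rightarrow> real^'p^'n \<Rightarrow> real" where
  "gcost C Y = (C ** Y) \<bullet> Y"

definition P_optimal :: "('m::finite \<Rightarrow> real^'n^'n) \<Rightarrow> real^'m \<Rightarrow> real^'n^'n \<Rightarrow> real^'p^'n \<Rightarrow> bool" where
  "P_optimal A b C Y \<longleftrightarrow> Y \<in> Mp A b \<and> (\<forall>Y'\<in>(Mp A b :: (real^'p^'n) set). gcost C Y \<le> gcost C Y')"

definition assumption1 :: "('m::finite \<Rightarrow> real^'n^'n) \<Rightarrow> real^'m \<Rightarrow> 'p::finite itself \<Rightarrow> bool" where
  "assumption1 A b _ \<longleftrightarrow> (Mp A b :: (real^'p^'n) set) \<noteq> {} \<and>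
     ((\<forall>Y\<in>(Mp A b :: (real^'p^'n) set).
         \<forall>c::'m \<Rightarrow> real. (\<Sum>i\<in>UNIV. c i *\<^sub>R (A i ** Y)) = 0 \<longrightarrow> (\<forall>i. c i = 0))
      \<or> (\<exists>U::(real^'p^'n) set. open U \<and> Mp A b \<subseteq> U \<and>
           (\<exists>d. \<forall>Y\<in>U. dim (span (range (\<lambda>i. A i ** Y))) = d)))"

definition tangent :: "('m::finite \<Rightarrow> real^'n^'n) \<Rightarrow> real^'p^'n \<Rightarrow> (real^'p^'n) set" where
  "tangent A Y = {Yd. \<forall>i. (A i ** Y) \<bullet> Yd = 0}"

definition Gmat :: "('m::finite \<Rightarrow> real^'n^'n) \<Rightarrow> real^'p^'n \<Rightarrow> real^'m^'m" where
  "Gmat A Y = (\<chi> i j. (A i ** Y) \<bullet> (A j ** Y))"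

definition pinv :: "real^'m^'m \<Rightarrow> real^'m^'m" where
  "pinv M = (THE P. M ** P ** M = M \<and> P ** M ** P = P \<and>
                    transpose (M ** P) = M ** P \<and> transpose (P ** M) = P ** M)"

definition mu :: "('m::finite \<Rightarrow> real^'n^'n) \<Rightarrow> real^'n^'n \<Rightarrow> real^'p^'n \<Rightarrow> real^'m" where
  "mu A C Y = pinv (Gmat A Y) *v Aop A (C ** Y ** transpose Y)"

definition Smat :: "('m::finite \<Rightarrow> real^'n^'n) \<Rightarrow> real^'n^'n \<Rightarrow> real^'p^'n \<Rightarrow> real^'n^'n" where
  "Smat A C Y = C - Aadj A (mu A C Y)"

definition critical :: "('m::finite \<Rightarrow> real^'n^'n) \<Rightarrow> real^'m \<Rightarrow> real^'n^'n \<Rightarrow> real^'p^'n \<Rightarrow> bool" where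
  "critical A b C Y \<longleftrightarrow> Y \<in> Mp A b \<and> Smat A C Y ** Y = 0"

definition second_order_critical :: "('m::finite \<Rightarrow> real^'n^'n) \<Rightarrow> real^'m \<Rightarrow> real^'n^'n \<Rightarrow> real^'p^'n \<Rightarrow> bool" where
  "second_order_critical A b C Y \<longleftrightarrow> critical A b C Y \<and>
     (\<forall>Yd\<in>tangent A Y. Yd \<bullet> (Smat A C Y ** Yd) \<ge> 0)"

text \<open>Symmetric part; used to parametrize S^n from R^{n x n}.\<close>
definition sym_part :: "real^'n^'n \<Rightarrow> real^'n^'n" where
  "sym_part M = (1/2) *\<^sub>R (M + transpose M)"

end

theory Submission
  imports Defs
begin

(* If a second-order critical point Y is rank deficient, the tangent directions u z^T with
   Y z = 0 show that S(Y) = C - A*(mu) is positive semidefinite; together with S(Y) Y = 0 this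
   is a dual certificate, so Y Y^T solves (SDP) and Y solves (P).
   If Y has full column rank p, then S = S(Y) is symmetric with S Y = 0. Choosing p independent
   rows I of Y, S is congruent to its restriction to the complement of I by a matrix that
   differs from the identity only in the columns in I. Hence every M whose symmetric part C
   admits such a critical point is the value of a polynomial map on a linear space of dimension
   (n-p) p + (n-p)(n-p+1)/2 + rank A + n(n-1)/2 (the last summand accounts for the skew part
   of M), which is less than n^2 exactly when rank A < p(p+1)/2. Differentiable images of
   lower-dimensional spaces are null, and there are finitely many choices of I. *)

section \<open>Matrix algebra\<close>

lemma sym_mat_iff: "sym_mat X \<longleftrightarrow> (\<forall>a b. X$a$b = X$b$a)"
  unfolding sym_mat_def by (auto simp: vec_eq_iff transpose_def)

lemma inner_matrix_entries: "(U::real^'p^'n) \<bullet> V = (\<Sum>i\<in>UNIV. \<Sum>j\<in>UNIV. U$i$j * V$i$j)"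
  by (simp add: inner_vec_def)

lemma inner_mult_transpose: "(S::real^'n^'n) \<bullet> (Y ** transpose Y) = (S ** Y) \<bullet> (Y::real^'p^'n)"
proof -
  have "(S ** Y) \<bullet> Y = (\<Sum>i\<in>UNIV. \<Sum>k\<in>UNIV. \<Sum>j\<in>UNIV. S$i$j * Y$j$k * Y$i$k)"
    by (simp add: inner_matrix_entries matrix_matrix_mult_def sum_distrib_right)
  also have "\<dots> = (\<Sum>i\<in>UNIV. \<Sum>j\<in>UNIV. \<Sum>k\<in>UNIV. S$i$j * Y$j$k * Y$i$k)"
    by (rule sum.cong[OF refl], rule sum.swap)
  also have "\<dots> = S \<bullet> (Y ** transpose Y)"
    by (simp add: inner_matrix_entries matrix_matrix_mult_def transpose_def sum_distrib_left mult_ac)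
  finally show ?thesis by simp
qed

lemma inner_matrix_vector_mult: "x \<bullet> ((Y::real^'p^'n) *v w) = (transpose Y *v x) \<bullet> w"
proof -
  have "x \<bullet> (Y *v w) = (\<Sum>i\<in>UNIV. \<Sum>j\<in>UNIV. x$i * Y$i$j * w$j)"
    by (simp add: inner_vec_def matrix_vector_mult_def sum_distrib_left mult_ac)
  also have "\<dots> = (\<Sum>j\<in>UNIV. \<Sum>i\<in>UNIV. x$i * Y$i$j * w$j)" by (rule sum.swap)
  also have "\<dots> = (transpose Y *v x) \<bullet> w"
    by (simp add: inner_vec_def matrix_vector_mult_def transpose_def sum_distrib_right
        sum_distrib_left mult_ac)
  finally show ?thesis .
qed

lemma linear_transpose: "linear (transpose :: real^'n^'m \<Rightarrow> real^'m^'n)"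
  by (auto intro!: linearI simp: transpose_def vec_eq_iff)

lemma matrix_diff_ldistrib: "(A::'a::ring_1^'n^'m) ** (B - C) = A ** B - A ** C"
  by (simp add: matrix_matrix_mult_def vec_eq_iff sum_subtractf algebra_simps)

lemma Aadj_inner: "Aadj A \<nu> \<bullet> X = \<nu> \<bullet> Aop A X"
  unfolding Aadj_def Aop_def inner_sum_left inner_vec_def[of \<nu>] by simp

definition outer :: "real^'n \<Rightarrow> real^'p \<Rightarrow> real^'p^'n" where
  "outer u z = (\<chi> i k. u$i * z$k)"

lemma inner_outer: "(M::real^'p^'n) \<bullet> outer u z = u \<bullet> (M *v z)"
  by (simp add: inner_matrix_entries outer_def inner_vec_def matrix_vector_mult_def sum_distrib_left mult_ac)

lemma outer_mult_vec: "outer u z *v x = (z \<bullet> x) *\<^sub>R u"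
  by (simp add: outer_def inner_vec_def matrix_vector_mult_def vec_eq_iff sum_distrib_left
      sum_distrib_right mult_ac)

lemma inner_axis_quadratic: "axis a s \<bullet> ((X::real^'n^'n) *v axis b r) = s * r * X$a$b"
proof -
  have "axis a s \<bullet> v = s * v$a" for v :: "real^'n"
    by (simp add: inner_commute[of "axis a s"] inner_axis)
  then show ?thesis by (simp add: matrix_vector_mult_def axis_def if_distrib cong: if_cong)
qed

section \<open>Positive semidefinite matrices\<close>

lemma psd_diag_nonneg: "psd X \<Longrightarrow> 0 \<le> X$i$i"
  using inner_axis_quadratic[of i 1 X i 1] unfolding psd_def by (metis mult_1)

lemma psd_zero_diag_eq_0:
  assumes "psd X" "sym_mat X" "\<forall>i. X$i$i = 0"
  shows "X = 0"
proof -
  have "X$a$b = 0" if "a \<noteq> b" for a b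
  proof -
    define x where "x = axis a (- X$a$b) + axis b (1::real)"
    have "0 \<le> x \<bullet> (X *v x)" using assms(1) unfolding psd_def by blast
    also have "x \<bullet> (X *v x) = - 2 * (X$a$b)\<^sup>2"
      using assms(2,3) unfolding x_def sym_mat_iff
      by (simp add: matrix_vector_right_distrib inner_add_left inner_add_right
          inner_axis_quadratic power2_eq_square)
    finally show ?thesis by simp
  qed
  then show ?thesis using assms(3) by (metis vec_eq_iff zero_index)
qed

lemma psd_Schur_complement:
  fixes X :: "real^'n^'n"
  assumes psd: "psd X" and sym: "sym_mat X" and d: "0 < X$i$i"
  shows "psd (X - (1 / X$i$i) *\<^sub>R outer (column i X) (column i X))"
  unfolding psd_def
proof
  fix x :: "real^'n"
  let ?d = "X$i$i" and ?c = "column i X"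
  define t where "t = - (?c \<bullet> x) / ?d"
  have Xe: "X *v axis i 1 = ?c" by (rule matrix_vector_mult_basis)
  have eX: "axis i 1 \<bullet> (X *v y) = ?c \<bullet> y" for y
    using sym unfolding sym_mat_def by (simp add: inner_matrix_vector_mult Xe)
  have ce: "?c \<bullet> axis i 1 = ?d" "axis i 1 \<bullet> ?c = ?d"
    by (simp_all add: inner_axis inner_commute[of "axis i 1"] column_def)
  have "0 \<le> (x + t *\<^sub>R axis i 1) \<bullet> (X *v (x + t *\<^sub>R axis i 1))"
    using psd unfolding psd_def by blast
  also have "\<dots> = x \<bullet> (X *v x) + 2 * t * (?c \<bullet> x) + t * t * ?d"
    by (simp add: matrix_vector_right_distrib inner_add_left inner_add_right matrix_vector_mult_scaleR
        Xe eX inner_commute ce algebra_simps inner_axis_quadratic[of i t X i 1, simplified])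
  also have "\<dots> = x \<bullet> (X *v x) - (?c \<bullet> x)\<^sup>2 / ?d"
    using d by (simp add: t_def field_simps power2_eq_square)
  also have "\<dots> = x \<bullet> ((X - (1 / ?d) *\<^sub>R outer ?c ?c) *v x)"
    by (simp add: matrix_vector_mult_diff_rdistrib scaleR_matrix_vector_assoc[symmetric]
        outer_mult_vec inner_diff_right inner_commute power2_eq_square)
  finally show "0 \<le> x \<bullet> ((X - (1 / ?d) *\<^sub>R outer ?c ?c) *v x)" .
qed

text \<open>Peeling off the rank-one parts c c^T / d given by the Schur complements (a Cholesky
  factorisation) writes X as a sum of such terms, on each of which S is nonnegative.\<close>
lemma psd_inner_nonneg:
  fixes S X :: "real^'n^'n"
  assumes S: "psd S"
  shows "psd X \<Longrightarrow> sym_mat X \<Longrightarrow> 0 \<le> S \<bullet> X"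
proof (induction "card {j. X$j$j \<noteq> 0}" arbitrary: X rule: less_induct)
  case less
  show ?case
  proof (cases "\<forall>i. X$i$i = 0")
    case True
    then show ?thesis using psd_zero_diag_eq_0[OF less.prems] by simp
  next
    case False
    then obtain i where "X$i$i \<noteq> 0" by blast
    with psd_diag_nonneg[OF less.prems(1)] have d: "0 < X$i$i"
      by (simp add: order_less_le)
    let ?c = "column i X"
    define X' where "X' = X - (1 / X$i$i) *\<^sub>R outer ?c ?c"
    have psd': "psd X'" unfolding X'_def by (rule psd_Schur_complement[OF less.prems d])
    have sym': "sym_mat X'"
      using less.prems(2) unfolding X'_def sym_mat_iff
      by (simp add: outer_def column_def mult.commute)
    have diag': "X'$j$j = X$j$j - (?c$j)\<^sup>2 / X$i$i" for j
      by (simp add: X'_def outer_def power2_eq_square)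
    have "{j. X'$j$j \<noteq> 0} \<subset> {j. X$j$j \<noteq> 0}"
    proof
      show "{j. X'$j$j \<noteq> 0} \<subseteq> {j. X$j$j \<noteq> 0}"
      proof
        fix j assume "j \<in> {j. X'$j$j \<noteq> 0}"
        moreover have "X'$j$j \<le> X$j$j" using diag'[of j] d by simp
        ultimately show "j \<in> {j. X$j$j \<noteq> 0}" using psd_diag_nonneg[OF psd', of j] by auto
      qed
      have "X'$i$i = 0" using diag'[of i] d by (simp add: column_def power2_eq_square)
      then show "{j. X'$j$j \<noteq> 0} \<noteq> {j. X$j$j \<noteq> 0}" using \<open>X$i$i \<noteq> 0\<close> by blast
    qed
    then have "0 \<le> S \<bullet> X'"
      using less.hyps psd' sym' by (meson finite psubset_card_mono)
    moreover have "S \<bullet> X = S \<bullet> X' + (1 / X$i$i) * (?c \<bullet> (S *v ?c))"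
      by (simp add: X'_def inner_diff_right inner_outer)
    moreover have "0 \<le> ?c \<bullet> (S *v ?c)" using S unfolding psd_def by blast
    ultimately show ?thesis using d by simp
  qed
qed

lemma sdp_feasible_mult_transpose:
  assumes "Y \<in> Mp A b"
  shows "sdp_feasible A b ((Y::real^'p^'n) ** transpose Y)"
proof -
  have "x \<bullet> ((Y ** transpose Y) *v x) = (transpose Y *v x) \<bullet> (transpose Y *v x)" for x
    by (simp add: matrix_vector_mul_assoc[symmetric] inner_matrix_vector_mult)
  then have "psd (Y ** transpose Y)" unfolding psd_def by simp
  then show ?thesis
    using assms unfolding sdp_feasible_def sym_mat_def Mp_def by (simp add: matrix_transpose_mul)
qed

section \<open>Rank-deficient second-order critical points\<close>

lemma gcost_eq_inner: "gcost C Y = C \<bullet> ((Y::real^'p^'n) ** transpose Y)"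
  by (simp add: gcost_def inner_mult_transpose)

lemma optimal_if_psd_dual_certificate:
  fixes Y :: "real^'p^'n"
  assumes Y: "Y \<in> Mp A b" and S: "psd S" "S ** Y = 0" and C: "C = S + Aadj A \<nu>"
  shows "P_optimal A b C Y \<and> sdp_optimal A b C (Y ** transpose Y)"
proof -
  have "C \<bullet> (Y ** transpose Y) = \<nu> \<bullet> b"
    using Y S(2) by (simp add: C inner_add_left inner_mult_transpose[of S] Aadj_inner Mp_def)
  moreover have "\<nu> \<bullet> b \<le> C \<bullet> X" if "sdp_feasible A b X" for X
    using that psd_inner_nonneg[OF S(1)]
    by (simp add: C inner_add_left Aadj_inner sdp_feasible_def)
  ultimately have "C \<bullet> (Y ** transpose Y) \<le> C \<bullet> X" if "sdp_feasible A b X" for X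
    using that by simp
  then show ?thesis
    using Y sdp_feasible_mult_transpose[OF Y] sdp_feasible_mult_transpose
    unfolding sdp_optimal_def P_optimal_def gcost_eq_inner by blast
qed

text \<open>The directions u z^T with Y z = 0 are tangent, and along them the second-order
  condition reads (z \<bullet> z) (u \<bullet> S u) \<ge> 0.\<close>
lemma second_order_critical_psd_if_rank_deficient:
  fixes Y :: "real^'p^'n"
  assumes soc: "second_order_critical A b C Y" and z: "z \<noteq> 0" "Y *v z = 0"
  shows "psd (Smat A C Y)"
  unfolding psd_def
proof
  fix u :: "real^'n"
  let ?S = "Smat A C Y"
  have "outer u z \<in> tangent A Y"
    unfolding tangent_def by (simp add: inner_outer matrix_vector_mul_assoc[symmetric] z)
  then have "0 \<le> outer u z \<bullet> (?S ** outer u z)"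
    using soc unfolding second_order_critical_def by blast
  also have "\<dots> = (z \<bullet> z) * (u \<bullet> (?S *v u))"
    by (simp add: inner_commute[of "outer u z"] inner_outer matrix_vector_mul_assoc[symmetric]
        outer_mult_vec matrix_vector_mult_scaleR)
  moreover have "0 < z \<bullet> z" using z(1) by simp
  ultimately show "0 \<le> u \<bullet> (?S *v u)" by (simp add: zero_le_mult_iff)
qed

lemma second_order_critical_optimal_if_rank_deficient:
  fixes Y :: "real^'p::finite^'n::finite"
  assumes soc: "second_order_critical A b C Y" and Y: "\<not> inj ((*v) Y)"
  shows "P_optimal A b C Y \<and> sdp_optimal A b C (Y ** transpose Y)"
proof -
  obtain z where z: "z \<noteq> 0" "Y *v z = 0"
    using Y by (metis full_rank_injective matrix_nonfull_linear_equations_eq)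
  have "Y \<in> Mp A b" "Smat A C Y ** Y = 0"
    using soc by (simp_all add: second_order_critical_def critical_def)
  moreover have "psd (Smat A C Y)" by (rule second_order_critical_psd_if_rank_deficient[OF soc z])
  moreover have "C = Smat A C Y + Aadj A (mu A C Y)" by (simp add: Smat_def)
  ultimately show ?thesis by (intro optimal_if_psd_dual_certificate)
qed

section \<open>Full-rank critical points\<close>

definition diag_indicator :: "'n set \<Rightarrow> real^'n^'n" where
  "diag_indicator J = (\<chi> i j. if i = j \<and> i \<in> J then 1 else 0)"

definition supported_on :: "('n \<times> 'k) set \<Rightarrow> (real^'k^'n) set" where
  "supported_on T = {Z. \<forall>i k. Z$i$k \<noteq> 0 \<longrightarrow> (i, k) \<in> T}"

lemma diag_indicator_mult: "(diag_indicator J ** X)$i$k = (if i \<in> J then X$i$k else 0)"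
  by (simp add: diag_indicator_def matrix_matrix_mult_def if_distrib[of "\<lambda>x. x * _"] cong: if_cong)

lemma mult_diag_indicator: "(X ** diag_indicator J)$i$k = (if k \<in> J then X$i$k else 0)"
  by (simp add: diag_indicator_def matrix_matrix_mult_def if_distrib[of "\<lambda>x. _ * x"]
      conj_commute[of "_ = k"] cong: if_cong conj_cong)

lemma transpose_diag_indicator [simp]: "transpose (diag_indicator J) = diag_indicator J"
  by (simp add: diag_indicator_def transpose_def vec_eq_iff)

lemma obtain_independent_rows:
  fixes Y :: "real^'p^'n"
  assumes "inj ((*v) Y)"
  obtains I where "card I = CARD('p)" "inj_on (($) Y) I" "independent (($) Y ` I)"
proof -
  obtain B where B: "B \<subseteq> range (($) Y)" "independent B" "range (($) Y) \<subseteq> span B"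
    by (rule maximal_independent_subset)
  have "rows Y = range (($) Y)" by (auto simp: rows_def row_def vec_lambda_eta)
  then have "dim (range (($) Y)) = CARD('p)"
    using assms by (simp add: full_rank_injective[symmetric] row_rank_def)
  moreover have "dim (range (($) Y)) = dim B"
    using B(1,3) dim_subset[OF B(1)] dim_subset[OF B(3)] by (simp add: dim_span)
  ultimately have cB: "card B = CARD('p)" using dim_eq_card_independent[OF B(2)] by simp
  define I where "I = inv_into UNIV (($) Y) ` B"
  have img: "($) Y ` I = B" using B(1) by (simp add: I_def image_inv_into_cancel)
  have "finite B" using B(2) by (rule finiteI_independent)
  then have "card I \<le> card B" unfolding I_def by (rule card_image_le)
  moreover have "card B \<le> card I" unfolding img[symmetric] by (rule card_image_le) simp
  ultimately have "card (($) Y ` I) = card I" using img by simp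
  then have "inj_on (($) Y) I" by (rule eq_card_imp_inj_on[rotated]) simp
  then show ?thesis
    using that img cB B(2) \<open>card I \<le> card B\<close> \<open>card B \<le> card I\<close> by simp
qed

lemma exists_dual_to_rows:
  fixes Y :: "real^'p^'n"
  assumes inj: "inj_on (($) Y) I" and indep: "independent (($) Y ` I)" and k: "k \<in> I"
  shows "\<exists>w. \<forall>i\<in>I. Y$i \<bullet> w = (if i = k then 1 else 0)"
proof -
  obtain g :: "real^'p \<Rightarrow> real" where g: "linear g"
    "\<forall>x\<in>($) Y ` I. g x = (if x = Y$k then 1 else 0)"
    using linear_independent_extend[OF indep, of "\<lambda>x. if x = Y$k then 1 else 0"] by auto
  have "Y$i \<bullet> adjoint g 1 = (if i = k then 1 else 0)" if "i \<in> I" for i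
  proof -
    have "Y$i \<bullet> adjoint g 1 = g (Y$i)" by (simp add: adjoint_works[OF g(1)])
    also have "\<dots> = (if Y$i = Y$k then 1 else 0)" using g(2) that by blast
    finally show ?thesis using inj_on_eq_iff[OF inj that k] by simp
  qed
  then show ?thesis by blast
qed

text \<open>The congruence is Q = 1 - Y W, where the columns of W in I are the dual basis to the
  rows of Y in I and the other columns vanish: then S Q = S, the rows of Q in I vanish, and the
  columns of Q outside I are those of the identity.\<close>
lemma congruent_to_diag_indicator_restriction:
  fixes Y :: "real^'p^'n" and S :: "real^'n^'n"
  assumes Y: "inj ((*v) Y)" and S: "sym_mat S" "S ** Y = 0"
  obtains I Z where "card I = CARD('p)" "Z \<in> supported_on ((- I) \<times> I)"
    "S = transpose (diag_indicator (- I) - Z)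
           ** (diag_indicator (- I) ** S ** diag_indicator (- I)) ** (diag_indicator (- I) - Z)"
proof -
  obtain I where cI: "card I = CARD('p)" and inj: "inj_on (($) Y) I"
    and indep: "independent (($) Y ` I)"
    using obtain_independent_rows[OF Y] by blast
  obtain w where w: "\<And>k i. k \<in> I \<Longrightarrow> i \<in> I \<Longrightarrow> Y$i \<bullet> w k = (if i = k then 1 else 0)"
    using exists_dual_to_rows[OF inj indep] by metis
  let ?D = "diag_indicator (- I)"
  define W :: "real^'n^'p" where "W = (\<chi> a k. if k \<in> I then w k $ a else 0)"
  define Q where "Q = mat 1 - Y ** W"
  have YW: "(Y ** W)$i$k = (if k \<in> I then Y$i \<bullet> w k else 0)" for i k
    by (simp add: W_def matrix_matrix_mult_def inner_vec_def if_distrib cong: if_cong)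
  have Q: "Q$i$k = (if i = k then 1 else 0) - (Y ** W)$i$k" for i k
    by (simp add: Q_def mat_def)
  have SQ: "S ** Q = S"
    using S(2) by (simp add: Q_def matrix_diff_ldistrib matrix_mul_assoc)
  then have QS: "transpose Q ** S = S"
    using S(1) by (metis matrix_transpose_mul sym_mat_def)
  have DQ: "?D ** Q = Q"
    by (auto simp: vec_eq_iff diag_indicator_mult Q YW w)
  have "S = transpose Q ** S ** Q" using QS SQ by (simp add: matrix_mul_assoc)
  also have "\<dots> = transpose (?D ** Q) ** S ** (?D ** Q)" by (simp add: DQ)
  also have "\<dots> = transpose Q ** (?D ** S ** ?D) ** Q"
    by (simp add: matrix_transpose_mul matrix_mul_assoc)
  finally have "S = transpose (?D - (?D - Q)) ** (?D ** S ** ?D) ** (?D - (?D - Q))" by simp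
  moreover have "?D - Q \<in> supported_on ((- I) \<times> I)"
    by (auto simp: supported_on_def diag_indicator_def Q YW w)
  ultimately show ?thesis using that cI by blast
qed

lemma sym_mat_Smat:
  assumes symA: "\<forall>i. sym_mat (A i)" and C: "sym_mat C"
  shows "sym_mat (Smat A C Y)"
proof -
  have "sym_mat (Aadj A \<nu>)" for \<nu>
    using symA unfolding Aadj_def sym_mat_def
    by (simp add: linear_sum[OF linear_transpose] linear_scale[OF linear_transpose])
  then show ?thesis
    using C unfolding Smat_def sym_mat_def by (simp add: linear_diff[OF linear_transpose])
qed

section \<open>Dimension counts\<close>

definition skew_mat :: "real^'n^'n \<Rightarrow> bool" where
  "skew_mat K \<longleftrightarrow> transpose K = - K"

lemma subspace_supported_on: "subspace (supported_on T)"
  by (auto simp: subspace_def supported_on_def) (metis add.left_neutral)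

lemma subspace_sym_mat: "subspace {X. sym_mat X}"
  by (auto simp: subspace_def sym_mat_iff)

lemma subspace_skew_mat: "subspace {K. skew_mat K}"
  unfolding subspace_def skew_mat_def
  by (simp add: linear_add[OF linear_transpose] linear_scale[OF linear_transpose]
      linear_0[OF linear_transpose])

lemma sum_axis_axis_nth:
  "(\<Sum>q\<in>T. c q *\<^sub>R axis (fst q) (axis (snd q) (1::real)))$a$b
    = (if (a, b) \<in> T then c (a, b) else 0)"
  if "finite T"
proof -
  have "(\<Sum>q\<in>T. c q *\<^sub>R axis (fst q) (axis (snd q) (1::real)))$a$b
      = (\<Sum>q\<in>T. if q = (a, b) then c q else 0)"
    unfolding sum_component vector_scaleR_component
    by (intro sum.cong refl) (auto simp: axis_def)
  then show ?thesis using that by simp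
qed

lemma dim_supported_on_le:
  fixes T :: "('n::finite \<times> 'k::finite) set"
  shows "dim (supported_on T :: (real^'k^'n) set) \<le> card T"
proof -
  let ?E = "\<lambda>q::'n \<times> 'k. axis (fst q) (axis (snd q) 1) :: real^'k^'n"
  have "Z = (\<Sum>q\<in>T. Z$fst q$snd q *\<^sub>R ?E q)" if "Z \<in> supported_on T" for Z
  proof -
    have "(\<Sum>q\<in>T. Z$fst q$snd q *\<^sub>R ?E q)$a$b = Z$a$b" for a b
      unfolding sum_axis_axis_nth[OF finite] using that by (auto simp: supported_on_def)
    then show ?thesis by (simp add: vec_eq_iff)
  qed
  then have "supported_on T \<subseteq> span (?E ` T)"
    by (metis (no_types, lifting) image_eqI span_base span_scale span_sum subsetI)
  then have "dim (supported_on T) \<le> card (?E ` T)" by (rule dim_le_card) simp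
  also have "\<dots> \<le> card T" by (rule card_image_le) simp
  finally show ?thesis .
qed

lemma obtain_inj_to_nat:
  obtains f :: "'n::finite \<Rightarrow> nat" where "inj f"
  using finite_imp_inj_to_nat_seg[of "UNIV :: 'n set"] by auto

lemma card_less_pairs_le:
  fixes f :: "'n \<Rightarrow> nat"
  assumes "inj f" "finite J"
  shows "card {(a, b) \<in> J \<times> J. f a < f b} \<le> card J choose 2"
proof -
  let ?P = "{(a, b) \<in> J \<times> J. f a < f b}"
  have "inj_on (\<lambda>(a, b). {a, b}) ?P"
    by (auto simp: inj_on_def doubleton_eq_iff)
  then have "card ?P = card ((\<lambda>(a, b). {a, b}) ` ?P)" by (simp add: card_image)
  also have "\<dots> \<le> card {s. s \<subseteq> J \<and> card s = 2}"
  proof (rule card_mono)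
    show "finite {s. s \<subseteq> J \<and> card s = 2}" using assms(2) by simp
    show "(\<lambda>(a, b). {a, b}) ` ?P \<subseteq> {s. s \<subseteq> J \<and> card s = 2}"
      by (auto simp: card_insert_if)
  qed
  finally have "card ?P \<le> card {s. s \<subseteq> J \<and> card s = 2}" .
  then show ?thesis using n_subsets[OF assms(2)] by simp
qed

lemma dim_skew_mat_le: "dim {K :: real^'n::finite^'n. skew_mat K} \<le> CARD('n) choose 2"
proof -
  \<comment> \<open>an injection into nat orders the index type and so singles out the entries above
    the diagonal\<close>
  obtain f :: "'n \<Rightarrow> nat" where f: "inj f" by (rule obtain_inj_to_nat)
  let ?O = "{(a, b) \<in> UNIV \<times> UNIV. f a < f b}"
  have "K \<in> (\<lambda>N. N - transpose N) ` supported_on ?O" if "skew_mat K" for K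
  proof
    let ?N = "\<chi> a b. if f a < f b then K$a$b else 0"
    have K: "K$b$a = - K$a$b" for a b
      using arg_cong[OF that[unfolded skew_mat_def], of "\<lambda>M. M$a$b"] by (simp add: transpose_def)
    have "(?N - transpose ?N)$a$b = K$a$b" for a b
    proof (cases "f a" "f b" rule: linorder_cases)
      case equal
      then have "a = b" using f by (simp add: inj_eq)
      then show ?thesis using K[of a a] by (simp add: transpose_def)
    qed (use K[of a b] in \<open>auto simp: transpose_def\<close>)
    then show "K = ?N - transpose ?N" by (simp add: vec_eq_iff)
    show "?N \<in> supported_on ?O" by (simp add: supported_on_def)
  qed
  then have "{K. skew_mat K} \<subseteq> (\<lambda>N. N - transpose N) ` supported_on ?O" by blast
  then have "dim {K :: real^'n^'n. skew_mat K} \<le> dim ((\<lambda>N. N - transpose N) ` supported_on ?O)"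
    by (rule dim_subset)
  also have "\<dots> \<le> dim (supported_on ?O)"
    by (intro dim_image_le linear_compose_sub linear_transpose) (auto intro: linearI)
  also have "\<dots> \<le> card ?O" by (rule dim_supported_on_le)
  also have "\<dots> \<le> CARD('n) choose 2" using card_less_pairs_le[OF f, of UNIV] by simp
  finally show ?thesis .
qed

lemma dim_sym_mat_supported_on_le:
  fixes J :: "'n::finite set"
  shows "dim (supported_on (J \<times> J) \<inter> {R :: real^'n^'n. sym_mat R}) \<le> card J + (card J choose 2)"
proof -
  obtain f :: "'n \<Rightarrow> nat" where f: "inj f" by (rule obtain_inj_to_nat)
  let ?O = "{(a, b) \<in> J \<times> J. f a < f b}" and ?D = "(\<lambda>a. (a, a)) ` J"
  have "R \<in> (\<lambda>N. N + transpose N) ` supported_on (?D \<union> ?O)"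
    if R: "R \<in> supported_on (J \<times> J)" "sym_mat R" for R
  proof
    let ?N = "\<chi> a b. if f a < f b then R$a$b else if a = b then R$a$b / 2 else 0"
    have "(?N + transpose ?N)$a$b = R$a$b" for a b
    proof (cases "f a" "f b" rule: linorder_cases)
      case equal
      then have "a = b" using f by (simp add: inj_eq)
      then show ?thesis by (simp add: transpose_def)
    qed (use R(2) in \<open>auto simp: transpose_def sym_mat_iff\<close>)
    then show "R = ?N + transpose ?N" by (simp add: vec_eq_iff)
    show "?N \<in> supported_on (?D \<union> ?O)"
      using R(1) by (auto simp: supported_on_def)
  qed
  then have "supported_on (J \<times> J) \<inter> {R. sym_mat R}
      \<subseteq> (\<lambda>N. N + transpose N) ` supported_on (?D \<union> ?O)"
    by blast
  then have "dim (supported_on (J \<times> J) \<inter> {R :: real^'n^'n. sym_mat R})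
      \<le> dim ((\<lambda>N. N + transpose N) ` supported_on (?D \<union> ?O))"
    by (rule dim_subset)
  also have "\<dots> \<le> dim (supported_on (?D \<union> ?O) :: (real^'n^'n) set)"
    by (intro dim_image_le linear_compose_add linear_transpose) (auto intro: linearI)
  also have "\<dots> \<le> card (?D \<union> ?O)" by (rule dim_supported_on_le)
  also have "\<dots> \<le> card ?D + card ?O" by (rule card_Un_le)
  also have "\<dots> \<le> card J + (card J choose 2)"
    using card_less_pairs_le[OF f, of J] card_image_le[of J "\<lambda>a. (a, a)"] by simp
  finally show ?thesis .
qed

lemma dim_range_le_rankA:
  fixes A :: "'m::finite \<Rightarrow> real^'n::finite^'n"
  assumes symA: "\<forall>i. sym_mat (A i)"
  shows "dim (range A) \<le> rankA A"
proof -
  have lin: "linear (Aop A)"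
    by (auto intro!: linearI simp: Aop_def vec_eq_iff inner_add_right)
  have "X = 0" if "X \<in> span (range A)" "Aop A X = 0" for X
  proof -
    have "orthogonal X X"
      using that by (intro orthogonal_to_span[OF that(1)])
        (auto simp: orthogonal_def inner_commute Aop_def vec_eq_iff)
    then show ?thesis by (simp add: orthogonal_def)
  qed
  then have "inj_on (Aop A) (span (range A))"
    using lin by (simp add: linear_inj_on_iff_eq_0[OF lin subspace_span])
  then have "dim (Aop A ` range A) = dim (range A)" by (rule dim_image_eq[OF lin])
  moreover have "Aop A ` range A \<subseteq> Aop A ` {X. sym_mat X}" using symA by auto
  ultimately show ?thesis unfolding rankA_def by (metis dim_subset)
qed

text \<open>A point (Z, R, X, K) of the domain stands for the cost matrix Q^T R Q + X + K, where
  Q = D - Z is the congruence of congruent_to_diag_indicator_restriction, R the restricted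
  slack, X = A*(mu) and K the skew part of the cost matrix.\<close>
definition chart_domain :: "('m \<Rightarrow> real^'n^'n) \<Rightarrow> 'n set
    \<Rightarrow> ((real^'n^'n) \<times> (real^'n^'n) \<times> (real^'n^'n) \<times> (real^'n^'n)) set" where
  "chart_domain A I = supported_on ((- I) \<times> I)
     \<times> (supported_on ((- I) \<times> (- I)) \<inter> {R. sym_mat R}) \<times> span (range A) \<times> {K. skew_mat K}"

definition chart_map :: "'n set \<Rightarrow> (real^'n^'n) \<times> (real^'n^'n) \<times> (real^'n^'n) \<times> (real^'n^'n)
    \<Rightarrow> real^'n^'n" where
  "chart_map I = (\<lambda>(Z, R, X, K).
     transpose (diag_indicator (- I) - Z) ** R ** (diag_indicator (- I) - Z) + X + K)"

lemma subspace_chart_domain: "subspace (chart_domain A I)"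
  unfolding chart_domain_def
  by (intro subspace_Times subspace_inter subspace_supported_on subspace_sym_mat subspace_span
      subspace_skew_mat)

lemma choose_two_mult: "2 * (x choose 2) + x = x * (x::nat)"
proof -
  have "even (x * (x - 1))" by (cases "even x") auto
  then show ?thesis unfolding choose_two by (cases x) auto
qed

lemma dim_chart_domain_less:
  fixes A :: "'m::finite \<Rightarrow> real^'n::finite^'n"
  assumes symA: "\<forall>i. sym_mat (A i)" and I: "card I = p"
    and rank: "rankA A < p * (p + 1) div 2"
  shows "dim (chart_domain A I) < DIM(real^'n^'n)"
proof -
  let ?c = "card (- I)" and ?n = "CARD('n)"
  have n: "?n = ?c + p"
    using I card_Un_disjoint[of I "- I"] by (simp add: Compl_partition2[symmetric])
  have "dim (chart_domain A I)
      = dim (supported_on ((- I) \<times> I) :: (real^'n^'n) set)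
        + (dim (supported_on ((- I) \<times> (- I)) \<inter> {R :: real^'n^'n. sym_mat R})
        + (dim (range A) + dim {K :: real^'n^'n. skew_mat K}))"
    unfolding chart_domain_def
    by (simp add: dim_Times dim_span subspace_Times subspace_inter subspace_supported_on
        subspace_sym_mat subspace_skew_mat)
  also have "\<dots> \<le> ?c * p + (?c + (?c choose 2) + (rankA A + (?n choose 2)))"
    using dim_supported_on_le[of "(- I) \<times> I"] dim_sym_mat_supported_on_le[of "- I"]
      dim_range_le_rankA[OF symA] dim_skew_mat_le[where 'n = 'n]
    by (simp add: I card_cartesian_product)
  also have "\<dots> < ?n * ?n"
  proof -
    have "2 * (p * (p + 1) div 2) \<le> p * (p + 1)" by simp
    then have "2 * rankA A + 2 \<le> p * p + p" using rank by (simp add: algebra_simps)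
    moreover have "?n * ?n = ?c * ?c + 2 * (?c * p) + p * p" using n by (simp add: algebra_simps)
    ultimately show ?thesis using choose_two_mult[of ?c] choose_two_mult[of ?n] n by linarith
  qed
  finally show ?thesis by simp
qed

section \<open>Null sets of cost matrices\<close>

lemma negligible_differentiable_image_subspace:
  fixes f :: "'M::euclidean_space \<Rightarrow> 'N::euclidean_space"
  assumes S: "subspace S" and d: "dim S < DIM('N)" and f: "f differentiable_on S"
  shows "negligible (f ` S)"
proof -
  obtain T :: "'N set" where T: "subspace T" "dim T = dim S"
    using choose_subspace_of_subspace[of "dim S" "UNIV :: 'N set"] d by auto
  obtain g :: "'N \<Rightarrow> 'M" where g: "linear g" "g ` T = S"
    using subspace_isomorphism[OF T(1) S T(2)] by blast
  have "negligible T" using negligible_lowdim[of T] T(2) d by simp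
  moreover have "(\<lambda>x. f (g x)) differentiable_on T"
    by (rule differentiable_on_compose) (use g f in \<open>auto intro: linear_imp_differentiable_on\<close>)
  ultimately have "negligible ((\<lambda>x. f (g x)) ` T)"
    using negligible_differentiable_image_negligible[OF order_refl] by blast
  then show ?thesis using g(2) by (simp add: image_image[symmetric])
qed

lemma bounded_bilinear_matrix_matrix_mult:
  "bounded_bilinear ((**) :: real^'a^'b \<Rightarrow> real^'c^'a \<Rightarrow> real^'c^'b)"
proof -
  have "bilinear ((**) :: real^'a^'b \<Rightarrow> real^'c^'a \<Rightarrow> real^'c^'b)"
    unfolding bilinear_def
    by (auto intro!: linearI simp: vec_eq_iff matrix_matrix_mult_def sum_distrib_left
        sum.distrib algebra_simps)
  then show ?thesis by (simp add: bilinear_conv_bounded_bilinear)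
qed

lemma differentiable_matrix_matrix_mult:
  fixes f :: "'x::real_normed_vector \<Rightarrow> real^'a^'b" and g :: "'x \<Rightarrow> real^'c^'a"
  assumes "f differentiable (at x)" "g differentiable (at x)"
  shows "(\<lambda>x. f x ** g x) differentiable (at x)"
proof -
  obtain f' g' where "(f has_derivative f') (at x)" "(g has_derivative g') (at x)"
    using assms unfolding differentiable_def by blast
  from bounded_bilinear.FDERIV[OF bounded_bilinear_matrix_matrix_mult this]
  show ?thesis unfolding differentiable_def by (auto simp del: split_paired_Ex)
qed

lemma differentiable_chart_map: "chart_map I differentiable_on S"
proof -
  let ?D = "diag_indicator (- I)"
  have eq: "chart_map I = (\<lambda>t. (?D - transpose (fst t)) ** fst (snd t) ** (?D - fst t)
      + fst (snd (snd t)) + snd (snd (snd t)))"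
    by (simp add: chart_map_def fun_eq_iff linear_diff[OF linear_transpose])
  have "chart_map I differentiable (at t)" for t
    unfolding eq
    by (intro differentiable_add differentiable_diff differentiable_const
        differentiable_matrix_matrix_mult)
      (auto intro!: linear_imp_differentiable linearI
        simp: linear_add[OF linear_transpose] linear_scale[OF linear_transpose])
  then show ?thesis by (simp add: differentiable_at_imp_differentiable_on)
qed

lemma negligible_chart_image:
  fixes A :: "'m::finite \<Rightarrow> real^'n::finite^'n"
  assumes "\<forall>i. sym_mat (A i)" "card I = p" "rankA A < p * (p + 1) div 2"
  shows "negligible (chart_map I ` chart_domain A I)"
  by (intro negligible_differentiable_image_subspace subspace_chart_domain differentiable_chart_map
      dim_chart_domain_less[OF assms])

lemma mem_chart_image_if_full_rank_critical:
  fixes A :: "'m::finite \<Rightarrow> real^'n::finite^'n" and Y :: "real^'p::finite^'n"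
  assumes symA: "\<forall>i. sym_mat (A i)" and crit: "critical A b (sym_part M) Y"
    and Y: "inj ((*v) Y)"
  obtains I where "card I = CARD('p)" "M \<in> chart_map I ` chart_domain A I"
proof -
  let ?C = "sym_part M"
  let ?S = "Smat A ?C Y" and ?X = "Aadj A (mu A ?C Y)" and ?K = "(1/2) *\<^sub>R (M - transpose M)"
  have "sym_mat ?C"
    unfolding sym_part_def sym_mat_def
    by (simp add: transpose_scalar linear_add[OF linear_transpose] add.commute)
  then have S: "sym_mat ?S" by (rule sym_mat_Smat[OF symA])
  moreover have "?S ** Y = 0" using crit by (simp add: critical_def)
  ultimately obtain I Z where I: "card I = CARD('p)" and Z: "Z \<in> supported_on ((- I) \<times> I)"
    and SQ: "?S = transpose (diag_indicator (- I) - Z)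
        ** (diag_indicator (- I) ** ?S ** diag_indicator (- I)) ** (diag_indicator (- I) - Z)"
    using congruent_to_diag_indicator_restriction[OF Y] by blast
  let ?R = "diag_indicator (- I) ** ?S ** diag_indicator (- I)"
  have "?R \<in> supported_on ((- I) \<times> (- I))"
    by (simp add: supported_on_def mult_diag_indicator diag_indicator_mult)
  moreover have "sym_mat ?R"
    using S by (simp add: sym_mat_def matrix_transpose_mul matrix_mul_assoc)
  moreover have "?X \<in> span (range A)"
    unfolding Aadj_def by (intro span_sum span_scale span_base) auto
  moreover have "skew_mat ?K"
    by (simp add: skew_mat_def transpose_scalar linear_diff[OF linear_transpose]
        flip: scaleR_minus_right)
  ultimately have "(Z, ?R, ?X, ?K) \<in> chart_domain A I"
    using Z by (simp add: chart_domain_def)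
  moreover have "chart_map I (Z, ?R, ?X, ?K) = M"
  proof -
    have "chart_map I (Z, ?R, ?X, ?K) = ?S + ?X + ?K" by (simp add: chart_map_def SQ[symmetric])
    also have "\<dots> = ?C + ?K" by (simp add: Smat_def)
    also have "\<dots> = M" by (simp add: sym_part_def vec_eq_iff transpose_def field_simps)
    finally show ?thesis .
  qed
  ultimately show ?thesis using that I by (metis image_eqI)
qed

theorem theorem1:
  fixes A :: "'m::finite \<Rightarrow> real^'n::finite^'n"
    and b :: "real^'m"
    and p :: "'p::finite itself"
  assumes symA: "\<forall>i. sym_mat (A i)"
    and feas: "\<exists>X. sdp_feasible A b X"
    and rank: "CARD('p) * (CARD('p) + 1) div 2 > rankA A"
    and ass1: "assumption1 A b TYPE('p)"
  shows "\<exists>N \<in> null_sets (lborel :: (real^'n^'n) measure).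
           \<forall>M. M \<notin> N \<longrightarrow>
             (let C = sym_part M in
               \<forall>Y :: real^'p^'n. Y \<in> Mp A b \<and> second_order_critical A b C Y \<longrightarrow>
                 P_optimal A b C Y \<and> sdp_optimal A b C (Y ** transpose Y))"
proof -
  define bad where "bad = (\<Union>I\<in>{I :: 'n set. card I = CARD('p)}. chart_map I ` chart_domain A I)"
  have "negligible bad"
    unfolding bad_def using negligible_chart_image[OF symA _ rank] by (intro negligible_Union) auto
  then obtain N where N: "N \<in> null_sets lborel" "bad \<subseteq> N"
    by (auto simp: negligible_iff_null_sets null_sets_completion_iff2)
  have "P_optimal A b (sym_part M) Y \<and> sdp_optimal A b (sym_part M) (Y ** transpose Y)"
    if M: "M \<notin> N" and soc: "second_order_critical A b (sym_part M) Y"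
    for M and Y :: "real^'p^'n"
  proof (cases "inj ((*v) Y)")
    case True
    then obtain I where "card I = CARD('p)" "M \<in> chart_map I ` chart_domain A I"
      using mem_chart_image_if_full_rank_critical[OF symA] soc
      by (metis second_order_critical_def)
    then show ?thesis using M N(2) unfolding bad_def by blast
  next
    case False
    then show ?thesis using second_order_critical_optimal_if_rank_deficient[OF soc] by blast
  qed
  then show ?thesis using N(1) by (auto simp: Let_def)
qed

end
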